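(* Let $n\le 3$ and let $\mu$ be a valuated matroid of rank $n$ on $[2n]$. Then $L_\mu$ is isotropic if and only if $\mu\in\mathrm{SpDr}(n,2n)$.
   Context: $[2n]=\{1,\dots,n,\bar1,\dots,\bar n\}$ with $\bar{\bar i}=i$; $Si:=S\cup\{i\}$. $\mathbb{T}=\mathbb{R}\cup\{\infty\}$. A valuated matroid of rank $k$ on $[2n]$ is $\mu\in(\mathbb{T}^{\binom{[2n]}{k}}\setminus\{\infty\})/\mathbb{R}(1,\dots,1)$ such that for all $S\in\binom{[2n]}{k-1}$, $T\in\binom{[2n]}{k+1}$, the minimum of $\mu_{T\setminus i}+\mu_{Si}$ over $i\in T\setminus S$ is attained at least twice or is $\infty$. $L_\mu=\{x\in\mathbb{T}^{2n}:\forall T\in\binom{[2n]}{k+1},\ \min_{i\in T}(\mu_{T\setminus i}+x_i)\text{ attained at least twice or }\infty\}$. Points $x,y$ are orthogonal if $\min_{i\in[2n]}(x_i+y_{\bar i})$ is attained at least twice; $L$ is isotropic if any two of its points are orthogonal. $\mathrm{SpDr}(k,2n)$ is the set of valuated matroids $\mu$ of rank $k$ on $[2n]$ such that for every $S\in\binom{[2n]}{k-2}$ the minimum of $\mu_{S\cup\{i,\bar i\}}$ over $i\in[n]$ with $\{i,\bar i\}\cap S=\emptyset$ is attained at least twice (or is $\infty$). *)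

theory Defs
  imports Main "HOL-Library.Extended_Real"
begin

(* Ground set [2n] encoded as {0..<2n}: i < n plays the role of i+1, and
   n+i plays the role of \bar{(i+1)}. Tropical numbers T = R \<union> {\<infinity>} are
   ereals different from -\<infinity>. *)

definition ground :: "nat \<Rightarrow> nat set" where
  "ground n = {0..<2*n}"

definition bar :: "nat \<Rightarrow> nat \<Rightarrow> nat" where
  "bar n i = (if i < n then i + n else i - n)"

definition trop_min2 :: "'a set \<Rightarrow> ('a \<Rightarrow> ereal) \<Rightarrow> bool" where
  "trop_min2 I f \<longleftrightarrow>
     (\<forall>i\<in>I. f i = \<infinity>) \<or>
     (\<exists>i\<in>I. \<exists>j\<in>I. i \<noteq> j \<and> f i = f j \<and> (\<forall>l\<in>I. f i \<le> f l))"

(* valuated matroid of rank k on [2n]; mu is a representative of the class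
   modulo R(1,...,1), only its values on k-subsets of [2n] matter *)
definition valuated_matroid :: "nat \<Rightarrow> nat \<Rightarrow> (nat set \<Rightarrow> ereal) \<Rightarrow> bool" where
  "valuated_matroid n k \<mu> \<longleftrightarrow>
     (\<forall>B. B \<subseteq> ground n \<and> card B = k \<longrightarrow> \<mu> B \<noteq> -\<infinity>) \<and>
     (\<exists>B. B \<subseteq> ground n \<and> card B = k \<and> \<mu> B \<noteq> \<infinity>) \<and>
     (\<forall>S T. S \<subseteq> ground n \<and> card S + 1 = k \<and> T \<subseteq> ground n \<and> card T = k + 1 \<longrightarrow>
        trop_min2 (T - S) (\<lambda>i. \<mu> (T - {i}) + \<mu> (insert i S)))"

(* tropical linear space L_mu \<subseteq> T^{2n} (points are functions, only the
   values on [2n] matter) *)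
definition Lmu :: "nat \<Rightarrow> nat \<Rightarrow> (nat set \<Rightarrow> ereal) \<Rightarrow> (nat \<Rightarrow> ereal) set" where
  "Lmu n k \<mu> = {x. (\<forall>i\<in>ground n. x i \<noteq> -\<infinity>) \<and>
     (\<forall>T. T \<subseteq> ground n \<and> card T = k + 1 \<longrightarrow> trop_min2 T (\<lambda>i. \<mu> (T - {i}) + x i))}"

definition orthogonal :: "nat \<Rightarrow> (nat \<Rightarrow> ereal) \<Rightarrow> (nat \<Rightarrow> ereal) \<Rightarrow> bool" where
  "orthogonal n x y \<longleftrightarrow> trop_min2 (ground n) (\<lambda>i. x i + y (bar n i))"

definition isotropic :: "nat \<Rightarrow> (nat \<Rightarrow> ereal) set \<Rightarrow> bool" where
  "isotropic n L \<longleftrightarrow> (\<forall>x\<in>L. \<forall>y\<in>L. orthogonal n x y)"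

definition SpDr :: "nat \<Rightarrow> nat \<Rightarrow> (nat set \<Rightarrow> ereal) set" where
  "SpDr k n = {\<mu>. valuated_matroid n k \<mu> \<and>
     (\<forall>S. S \<subseteq> ground n \<and> card S + 2 = k \<longrightarrow>
        trop_min2 {i. i < n \<and> i \<notin> S \<and> bar n i \<notin> S} (\<lambda>i. \<mu> (S \<union> {i, bar n i})))}"

end

theory Submission
  imports Defs
begin

(* Every point x of L_mu lies below a translate of a cocircuit j |-> mu (S + j), |S| = n - 1,
   touching x at any prescribed finite coordinate; as cocircuits lie in L_mu, L_mu is isotropic
   iff the cocircuits are pairwise orthogonal.

   If an (n-2)-set S contains no pair {i, bar i}, exactly two pairs {a, bar a} and {b, bar b}
   avoid S. For c in {a, bar a} and d in {b, bar b}, orthogonality of the cocircuits of S + c and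
   S + d has only two possibly finite terms and gives
   mu (S + a + bar a) + mu (S + c + d) = mu (S + c + d) + mu (S + b + bar b);
   if all mu (S + c + d) are infinite, the cocircuits of S + a and S + bar a force
   mu (S + a + bar a) = infinity, and likewise for b. This is the symplectic relation at S.

   Conversely, for n <= 3 the symplectic relations say mu B = mu (perp B) for every n-set B,
   where perp B = [2n] - bar B: a pair-free B is its own perp, and S + {i, bar i} has perp
   S + {j, bar j} for the other free pair {j, bar j}. Under this invariance, orthogonality of the
   cocircuits of S and S' is the Pluecker relation of mu for S and perp S'.

   The bound n <= 3 enters only through: every (n-2)-set is pair-free, and every n-set contains
   at most one pair. *)

lemma finite_ground [simp]: "finite (ground n)"
  by (simp add: ground_def)

lemma card_ground [simp]: "card (ground n) = 2 * n"
  by (simp add: ground_def)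

lemma finite_subset_ground: "A \<subseteq> ground n \<Longrightarrow> finite A"
  using finite_subset finite_ground by blast

lemma bar_in_ground: "i \<in> ground n \<Longrightarrow> bar n i \<in> ground n"
  by (auto simp: ground_def bar_def)

lemma bar_bar [simp]: "i \<in> ground n \<Longrightarrow> bar n (bar n i) = i"
  by (auto simp: ground_def bar_def)

lemma bar_neq: "i \<in> ground n \<Longrightarrow> bar n i \<noteq> i"
  by (auto simp: ground_def bar_def)

lemma inj_on_bar: "inj_on (bar n) (ground n)"
  by (metis bar_bar inj_onI)

lemma bar_mod: "i \<in> ground n \<Longrightarrow> bar n i mod n = i mod n"
  by (auto simp: ground_def bar_def le_mod_geq)

lemma ground_mod_cases: "i \<in> ground n \<Longrightarrow> i mod n < n \<and> (i = i mod n \<or> i = bar n (i mod n))"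
  by (cases "i < n") (auto simp: ground_def bar_def le_mod_geq)

section \<open>Tropical minima attained twice\<close>

lemma trop_min2_iff:
  assumes "finite A"
  shows "trop_min2 A f \<longleftrightarrow> (\<forall>i\<in>A. f i \<noteq> \<infinity> \<longrightarrow> (\<exists>j\<in>A - {i}. f j \<le> f i))"
proof
  assume "trop_min2 A f"
  then show "\<forall>i\<in>A. f i \<noteq> \<infinity> \<longrightarrow> (\<exists>j\<in>A - {i}. f j \<le> f i)"
    unfolding trop_min2_def by (metis Diff_iff order_refl singletonD)
next
  assume le: "\<forall>i\<in>A. f i \<noteq> \<infinity> \<longrightarrow> (\<exists>j\<in>A - {i}. f j \<le> f i)"
  show "trop_min2 A f"
  proof (cases "\<forall>i\<in>A. f i = \<infinity>")
    case False
    then have "A \<noteq> {}" by blast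
    then obtain i where i: "i \<in> A" "\<forall>l\<in>A. f i \<le> f l"
      using ex_is_arg_min_if_finite[OF assms, of f] unfolding is_arg_min_linorder by blast
    with False have "f i \<noteq> \<infinity>"
      by (metis ereal_infty_less_eq(1))
    with le i obtain j where "j \<in> A - {i}" "f j \<le> f i" by blast
    with i show ?thesis
      unfolding trop_min2_def by (metis DiffE antisym singletonI)
  qed (simp add: trop_min2_def)
qed

lemma not_trop_min2_iff:
  "finite A \<Longrightarrow> \<not> trop_min2 A f \<longleftrightarrow> (\<exists>i\<in>A. f i \<noteq> \<infinity> \<and> (\<forall>j\<in>A - {i}. f i < f j))"
  by (auto simp: trop_min2_iff not_le)

lemma strict_min_transfer:
  fixes g h :: "'a \<Rightarrow> ereal"
  assumes le: "\<forall>j\<in>A. g j \<le> ereal c + h j" and eq: "g i = ereal c + h i"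
    and finite: "g i \<noteq> \<infinity>" and strict: "\<forall>j\<in>A - {i}. g i < g j"
  shows "h i \<noteq> \<infinity> \<and> (\<forall>j\<in>A - {i}. h i < h j)"
proof (intro conjI ballI)
  show "h i \<noteq> \<infinity>" using finite eq by auto
  fix j assume j: "j \<in> A - {i}"
  have "ereal c + h i < ereal c + h j"
    using strict j le eq by (metis DiffD1 order_less_le_trans)
  then show "h i < h j" by (metis add_left_mono not_le)
qed

lemma trop_min2_cong: "(\<And>i. i \<in> A \<Longrightarrow> f i = g i) \<Longrightarrow> trop_min2 A f \<longleftrightarrow> trop_min2 A g"
  unfolding trop_min2_def by (simp cong: ball_cong bex_cong)

lemma trop_min2_drop_infinite:
  assumes "finite A" "A' \<subseteq> A" and inf: "\<forall>j\<in>A - A'. f j = \<infinity>"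
  shows "trop_min2 A f \<longleftrightarrow> trop_min2 A' f"
proof -
  have "finite A'" using assms(1,2) by (rule finite_subset[rotated])
  have below_finite: "j \<in> A'" if "j \<in> A" "f j \<le> f i" "f i \<noteq> \<infinity>" for i j
    using that inf by (metis DiffI ereal_infty_less_eq(1))
  show ?thesis
    unfolding trop_min2_iff[OF \<open>finite A\<close>] trop_min2_iff[OF \<open>finite A'\<close>]
  proof (intro iffI ballI impI)
    fix i assume "\<forall>i\<in>A. f i \<noteq> \<infinity> \<longrightarrow> (\<exists>j\<in>A - {i}. f j \<le> f i)"
      and "i \<in> A'" "f i \<noteq> \<infinity>"
    then obtain j where "j \<in> A - {i}" "f j \<le> f i" using assms(2) by blast
    then show "\<exists>j\<in>A' - {i}. f j \<le> f i" using below_finite \<open>f i \<noteq> \<infinity>\<close> by blast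
  next
    fix i assume le: "\<forall>i\<in>A'. f i \<noteq> \<infinity> \<longrightarrow> (\<exists>j\<in>A' - {i}. f j \<le> f i)"
      and "i \<in> A" "f i \<noteq> \<infinity>"
    then have "i \<in> A'" using inf by blast
    then show "\<exists>j\<in>A - {i}. f j \<le> f i" using le \<open>f i \<noteq> \<infinity>\<close> assms(2) by blast
  qed
qed

lemma trop_min2_doubleton:
  assumes "a \<noteq> b"
  shows "trop_min2 {a, b} f \<longleftrightarrow> f a = f b"
proof -
  have "{a, b} - {a} = {b}" "{a, b} - {b} = {a}" using assms by auto
  then have "trop_min2 {a, b} f \<longleftrightarrow> (f a \<noteq> \<infinity> \<longrightarrow> f b \<le> f a) \<and> (f b \<noteq> \<infinity> \<longrightarrow> f a \<le> f b)"
    by (simp add: trop_min2_iff)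
  also have "\<dots> \<longleftrightarrow> f a = f b"
    by (metis antisym ereal_infty_less_eq(1) order_refl)
  finally show ?thesis .
qed

section \<open>Pair-free sets and the complement of the reflection\<close>

definition pair_free :: "nat \<Rightarrow> nat set \<Rightarrow> bool" where
  "pair_free n S \<longleftrightarrow> (\<forall>i\<in>S. bar n i \<notin> S)"

definition free_indices :: "nat \<Rightarrow> nat set \<Rightarrow> nat set" where
  "free_indices n S = {i. i < n \<and> i \<notin> S \<and> bar n i \<notin> S}"

definition perp :: "nat \<Rightarrow> nat set \<Rightarrow> nat set" where
  "perp n B = ground n - bar n ` B"

lemma pair_free_if_card_le_1: "S \<subseteq> ground n \<Longrightarrow> card S \<le> 1 \<Longrightarrow> pair_free n S"
  by (auto simp: pair_free_def card_le_Suc0_iff_eq[OF finite_subset_ground] dest: bar_neq)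

lemma mod_image_eq_Diff_free_indices:
  assumes "S \<subseteq> ground n"
  shows "(\<lambda>j. j mod n) ` S = {..<n} - free_indices n S"
proof
  show "(\<lambda>j. j mod n) ` S \<subseteq> {..<n} - free_indices n S"
  proof
    fix i assume "i \<in> (\<lambda>j. j mod n) ` S"
    then obtain j where j: "j \<in> S" "i = j mod n" by blast
    then have "i < n" "j = i \<or> j = bar n i" using ground_mod_cases assms by blast+
    then show "i \<in> {..<n} - free_indices n S" using j by (auto simp: free_indices_def)
  qed
next
  show "{..<n} - free_indices n S \<subseteq> (\<lambda>j. j mod n) ` S"
  proof
    fix i assume "i \<in> {..<n} - free_indices n S"
    then have "i < n" "i \<in> S \<or> bar n i \<in> S" by (auto simp: free_indices_def)
    moreover have "i \<in> ground n" using \<open>i < n\<close> by (simp add: ground_def)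
    ultimately show "i \<in> (\<lambda>j. j mod n) ` S" using bar_mod by (metis image_eqI mod_less)
  qed
qed

lemma inj_on_mod_pair_free:
  assumes "S \<subseteq> ground n" "pair_free n S"
  shows "inj_on (\<lambda>j. j mod n) S"
proof (rule inj_onI)
  fix a b assume ab: "a \<in> S" "b \<in> S" "a mod n = b mod n"
  then have "a = b \<or> a = bar n b"
    using ground_mod_cases[of a n] ground_mod_cases[of b n] assms(1) by (metis bar_bar bar_in_ground subsetD)
  then show "a = b" using ab assms(2) by (auto simp: pair_free_def)
qed

lemma card_free_indices:
  assumes "S \<subseteq> ground n" "pair_free n S"
  shows "card (free_indices n S) + card S = n"
proof -
  have sub: "free_indices n S \<subseteq> {..<n}" by (auto simp: free_indices_def)
  have "card S = card ({..<n} - free_indices n S)"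
    using card_image[OF inj_on_mod_pair_free[OF assms]] mod_image_eq_Diff_free_indices[OF assms(1)] by simp
  also have "\<dots> = n - card (free_indices n S)"
    using sub by (simp add: card_Diff_subset finite_subset)
  finally show ?thesis using card_mono[OF _ sub] by simp
qed

lemma ground_diff_pairs:
  assumes "S \<subseteq> ground n"
  shows "ground n - (S \<union> bar n ` S) = (\<Union>i\<in>free_indices n S. {i, bar n i})"
proof
  show "ground n - (S \<union> bar n ` S) \<subseteq> (\<Union>i\<in>free_indices n S. {i, bar n i})"
  proof
    fix j assume j: "j \<in> ground n - (S \<union> bar n ` S)"
    then have "bar n j \<notin> S" by (metis DiffE UnCI bar_bar image_eqI)
    moreover have "j mod n < n" "j = j mod n \<or> j = bar n (j mod n)" using ground_mod_cases j by blast+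
    ultimately have "j mod n \<in> free_indices n S"
      using j by (auto simp: free_indices_def)
    then show "j \<in> (\<Union>i\<in>free_indices n S. {i, bar n i})"
      using \<open>j = j mod n \<or> j = bar n (j mod n)\<close> by blast
  qed
next
  show "(\<Union>i\<in>free_indices n S. {i, bar n i}) \<subseteq> ground n - (S \<union> bar n ` S)"
  proof
    fix j assume "j \<in> (\<Union>i\<in>free_indices n S. {i, bar n i})"
    then obtain i where i: "i < n" "i \<notin> S" "bar n i \<notin> S" and j: "j = i \<or> j = bar n i"
      by (auto simp: free_indices_def)
    have "i \<in> ground n" using i(1) by (simp add: ground_def)
    then have "j \<in> ground n" "j \<notin> S" "bar n j \<notin> S" using i j bar_in_ground by auto
    moreover have "j \<notin> bar n ` S"
      using \<open>bar n j \<notin> S\<close> assms by (auto simp: subset_iff)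
    ultimately show "j \<in> ground n - (S \<union> bar n ` S)" by blast
  qed
qed

lemma perp_pair_free:
  assumes "S \<subseteq> ground n" "pair_free n S"
  shows "perp n S = S \<union> (\<Union>i\<in>free_indices n S. {i, bar n i})"
proof -
  have "S \<inter> bar n ` S = {}"
    using assms by (auto simp: pair_free_def)
  then show ?thesis
    using assms(1) ground_diff_pairs[OF assms(1)] unfolding perp_def by blast
qed

lemma perp_pair_free_basis:
  assumes "B \<subseteq> ground n" "card B = n" "pair_free n B"
  shows "perp n B = B"
proof -
  have "finite (free_indices n B)"
    by (rule finite_subset[of _ "{..<n}"]) (auto simp: free_indices_def)
  then have "free_indices n B = {}"
    using card_free_indices[OF assms(1,3)] assms(2) by simp
  then show ?thesis using perp_pair_free[OF assms(1,3)] by simp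
qed

lemma free_indices_doubleton:
  assumes "S \<subseteq> ground n" "card S + 2 = n" "pair_free n S"
  obtains a b where "free_indices n S = {a, b}" "a \<noteq> b"
proof -
  have "card (free_indices n S) = 2"
    using card_free_indices[OF assms(1,3)] assms(2) by simp
  then show ?thesis using that by (auto simp: card_2_iff)
qed

lemma perp_Un_free_pair:
  assumes "S \<subseteq> ground n" "pair_free n S" "free_indices n S = {a, b}" "a \<noteq> b"
  shows "perp n (S \<union> {a, bar n a}) = S \<union> {b, bar n b}"
proof -
  have "a \<in> free_indices n S" "b \<in> free_indices n S" using assms(3) by auto
  then have ab: "a < n" "b < n" "a \<notin> S" "bar n a \<notin> S" and bars: "bar n a = a + n" "bar n b = b + n"
    by (auto simp: free_indices_def bar_def)
  have "perp n (S \<union> {a, bar n a}) = perp n S - {a, bar n a}"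
    using ab by (auto simp: perp_def bar_def ground_def)
  also have "\<dots> = (S \<union> {a, a + n, b, b + n}) - {a, a + n}"
    using perp_pair_free[OF assms(1,2)] assms(3) bars by (simp add: insert_commute)
  also have "\<dots> = S \<union> {b, b + n}"
    using ab bars assms(4) by auto
  finally show ?thesis using bars by simp
qed

lemma card_perp: "B \<subseteq> ground n \<Longrightarrow> card (perp n B) = 2 * n - card B"
  unfolding perp_def
  by (subst card_Diff_subset) (auto simp: bar_in_ground card_image inj_on_subset[OF inj_on_bar]
      intro: finite_subset_ground)

lemma perp_insert_bar: "j \<in> ground n \<Longrightarrow> perp n (insert (bar n j) B) = perp n B - {j}"
  unfolding perp_def by (auto simp: bar_in_ground)

section \<open>Cocircuits and the tropical linear space\<close>

definition cocircuit :: "(nat set \<Rightarrow> ereal) \<Rightarrow> nat set \<Rightarrow> nat \<Rightarrow> ereal" where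
  "cocircuit \<mu> S j = (if j \<in> S then \<infinity> else \<mu> (insert j S))"

(* For dependent S the cocircuit is constantly infinite, hence orthogonal to every vector. *)
definition cocircuits :: "nat \<Rightarrow> nat \<Rightarrow> (nat set \<Rightarrow> ereal) \<Rightarrow> (nat \<Rightarrow> ereal) set" where
  "cocircuits n k \<mu> = {cocircuit \<mu> S | S. S \<subseteq> ground n \<and> card S + 1 = k}"

definition matroid_bases :: "nat \<Rightarrow> nat \<Rightarrow> (nat set \<Rightarrow> ereal) \<Rightarrow> nat set set" where
  "matroid_bases n k \<mu> = {B. B \<subseteq> ground n \<and> card B = k \<and> \<mu> B \<noteq> \<infinity>}"

lemma valuated_matroid_not_minf:
  "valuated_matroid n k \<mu> \<Longrightarrow> B \<subseteq> ground n \<Longrightarrow> card B = k \<Longrightarrow> \<mu> B \<noteq> -\<infinity>"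
  unfolding valuated_matroid_def by blast

lemma valuated_matroid_pluecker:
  "valuated_matroid n k \<mu> \<Longrightarrow> S \<subseteq> ground n \<Longrightarrow> card S + 1 = k \<Longrightarrow> T \<subseteq> ground n \<Longrightarrow> card T = k + 1
    \<Longrightarrow> trop_min2 (T - S) (\<lambda>i. \<mu> (T - {i}) + \<mu> (insert i S))"
  unfolding valuated_matroid_def by blast

lemma matroid_bases_nonempty: "valuated_matroid n k \<mu> \<Longrightarrow> matroid_bases n k \<mu> \<noteq> {}"
  unfolding valuated_matroid_def matroid_bases_def by blast

lemma finite_matroid_bases: "finite (matroid_bases n k \<mu>)"
  by (rule finite_subset[of _ "Pow (ground n)"]) (auto simp: matroid_bases_def)

lemma cocircuit_not_minf:
  assumes "valuated_matroid n k \<mu>" "S \<subseteq> ground n" "card S + 1 = k" "j \<in> ground n"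
  shows "cocircuit \<mu> S j \<noteq> -\<infinity>"
  using assms valuated_matroid_not_minf[OF assms(1), of "insert j S"] finite_subset_ground[OF assms(2)]
  by (auto simp: cocircuit_def)

lemma Lmu_not_minf: "x \<in> Lmu n k \<mu> \<Longrightarrow> j \<in> ground n \<Longrightarrow> x j \<noteq> -\<infinity>"
  unfolding Lmu_def by blast

lemma Lmu_relation:
  "x \<in> Lmu n k \<mu> \<Longrightarrow> T \<subseteq> ground n \<Longrightarrow> card T = k + 1 \<Longrightarrow> trop_min2 T (\<lambda>i. \<mu> (T - {i}) + x i)"
  unfolding Lmu_def by blast

lemma Lmu_exchange:
  assumes x: "x \<in> Lmu n k \<mu>" and B: "B \<in> matroid_bases n k \<mu>" and i: "i \<in> ground n - B" "x i \<noteq> \<infinity>"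
  obtains j where "j \<in> B" "\<mu> (insert i (B - {j})) + x j \<le> \<mu> B + x i"
proof -
  let ?T = "insert i B"
  have "finite B" "?T - {i} = B" using B i(1) by (auto simp: matroid_bases_def intro: finite_subset_ground)
  moreover have "?T \<subseteq> ground n" "card ?T = k + 1"
    using B i(1) \<open>finite B\<close> by (auto simp: matroid_bases_def)
  then have "trop_min2 ?T (\<lambda>l. \<mu> (?T - {l}) + x l)" by (rule Lmu_relation[OF x])
  moreover have "\<mu> B + x i \<noteq> \<infinity>" using B i(2) by (simp add: matroid_bases_def)
  ultimately obtain j where "j \<in> ?T - {i}" "\<mu> (?T - {j}) + x j \<le> \<mu> B + x i"
    by (force simp: trop_min2_iff)
  moreover have "?T - {j} = insert i (B - {j})" using \<open>j \<in> ?T - {i}\<close> by auto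
  ultimately show ?thesis using that by auto
qed

lemma cocircuit_in_Lmu:
  assumes vm: "valuated_matroid n k \<mu>" and S: "S \<subseteq> ground n" "card S + 1 = k"
  shows "cocircuit \<mu> S \<in> Lmu n k \<mu>"
proof -
  have "trop_min2 T (\<lambda>i. \<mu> (T - {i}) + cocircuit \<mu> S i)"
    if T: "T \<subseteq> ground n" "card T = k + 1" for T
  proof -
    have "finite T" using T(1) by (rule finite_subset_ground)
    then have "trop_min2 T (\<lambda>i. \<mu> (T - {i}) + cocircuit \<mu> S i) \<longleftrightarrow>
               trop_min2 (T - S) (\<lambda>i. \<mu> (T - {i}) + cocircuit \<mu> S i)"
      by (rule trop_min2_drop_infinite) (auto simp: cocircuit_def)
    also have "\<dots> \<longleftrightarrow> trop_min2 (T - S) (\<lambda>i. \<mu> (T - {i}) + \<mu> (insert i S))"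
      by (rule trop_min2_cong) (simp add: cocircuit_def)
    finally show ?thesis using valuated_matroid_pluecker[OF vm S T] by blast
  qed
  then show ?thesis
    using cocircuit_not_minf[OF vm S] unfolding Lmu_def by blast
qed

lemma cocircuits_subset_Lmu: "valuated_matroid n k \<mu> \<Longrightarrow> cocircuits n k \<mu> \<subseteq> Lmu n k \<mu>"
  unfolding cocircuits_def using cocircuit_in_Lmu by blast

lemma obtain_maximal_infinite_independent:
  assumes "valuated_matroid n k \<mu>"
  obtains I where "\<forall>j\<in>I. x j = \<infinity>" "\<exists>B\<in>matroid_bases n k \<mu>. I \<subseteq> B"
    "\<And>B j. B \<in> matroid_bases n k \<mu> \<Longrightarrow> I \<subseteq> B \<Longrightarrow> j \<in> B - I \<Longrightarrow> x j \<noteq> \<infinity>"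
proof -
  let ?inf = "\<lambda>B. {j \<in> B. x j = \<infinity>}"
  obtain B0 where B0: "B0 \<in> matroid_bases n k \<mu>"
    and max: "Max ((\<lambda>B. card (?inf B)) ` matroid_bases n k \<mu>) = card (?inf B0)"
    using obtains_MAX[OF finite_matroid_bases matroid_bases_nonempty[OF assms]] by blast
  have le: "card (?inf B) \<le> card (?inf B0)" if "B \<in> matroid_bases n k \<mu>" for B
    using that max finite_matroid_bases by (metis (no_types, lifting) Max_ge finite_imageI image_eqI)
  have "x j \<noteq> \<infinity>" if B: "B \<in> matroid_bases n k \<mu>" "?inf B0 \<subseteq> B" and j: "j \<in> B - ?inf B0" for B j
  proof
    assume "x j = \<infinity>"
    have "finite B" using B(1) by (auto simp: matroid_bases_def intro: finite_subset_ground)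
    then have "card (insert j (?inf B0)) \<le> card (?inf B)"
      using B(2) j \<open>x j = \<infinity>\<close> by (intro card_mono) auto
    moreover have "card (insert j (?inf B0)) = card (?inf B0) + 1"
      using \<open>finite B\<close> B(2) j by (simp add: finite_subset)
    ultimately show False using le[OF B(1)] by simp
  qed
  then show ?thesis using that[of "?inf B0"] B0 by blast
qed

lemma real_of_ereal_add_le_add:
  fixes a b c d :: ereal
  assumes "\<bar>a\<bar> \<noteq> \<infinity>" "\<bar>b\<bar> \<noteq> \<infinity>" "\<bar>c\<bar> \<noteq> \<infinity>" "\<bar>d\<bar> \<noteq> \<infinity>" "a + b \<le> c + d"
  shows "real_of_ereal a + real_of_ereal b \<le> real_of_ereal c + real_of_ereal d"
  using assms by (cases a; cases b; cases c; cases d) auto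

(* Among the bases through I,
   one of minimal weight can be taken to contain i (by the exchange in L_mu), and removing i from it
   yields the dominating cocircuit. real_of_ereal sends the infinities to 0, but on the bases
   through I all terms of the weight are finite (finite_weight_terms). *)
context
  fixes n k \<mu> x I
  assumes vm: "valuated_matroid n k \<mu>"
    and x: "x \<in> Lmu n k \<mu>"
    and I_infinite: "\<forall>j\<in>I. x j = \<infinity>"
    and I_independent: "\<exists>B\<in>matroid_bases n k \<mu>. I \<subseteq> B"
    and I_maximal: "\<And>B j. B \<in> matroid_bases n k \<mu> \<Longrightarrow> I \<subseteq> B \<Longrightarrow> j \<in> B - I \<Longrightarrow> x j \<noteq> \<infinity>"
begin

definition weight :: "nat set \<Rightarrow> real" where
  "weight B = real_of_ereal (\<mu> B) - (\<Sum>j\<in>B - I. real_of_ereal (x j))"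

lemma finite_weight_terms:
  assumes "B \<in> matroid_bases n k \<mu>" "I \<subseteq> B" "j \<in> B - I"
  shows "\<bar>\<mu> B\<bar> \<noteq> \<infinity>" "\<bar>x j\<bar> \<noteq> \<infinity>"
  using assms valuated_matroid_not_minf[OF vm] Lmu_not_minf[OF x] I_maximal
  by (auto simp: matroid_bases_def)

lemma weight_exchange:
  assumes "finite B" "j \<in> B - I" "i \<notin> B" "i \<notin> I"
  shows "weight B - weight (insert i (B - {j})) =
    real_of_ereal (\<mu> B) - real_of_ereal (\<mu> (insert i (B - {j}))) + real_of_ereal (x i) - real_of_ereal (x j)"
proof -
  let ?R = "B - I - {j}"
  have "(\<Sum>l\<in>B - I. real_of_ereal (x l)) = real_of_ereal (x j) + (\<Sum>l\<in>?R. real_of_ereal (x l))"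
    using assms by (intro sum.remove) auto
  moreover have "insert i (B - {j}) - I = insert i ?R" using assms by auto
  then have "(\<Sum>l\<in>insert i (B - {j}) - I. real_of_ereal (x l))
      = real_of_ereal (x i) + (\<Sum>l\<in>?R. real_of_ereal (x l))"
    using assms by simp
  ultimately show ?thesis unfolding weight_def by simp
qed

lemma exists_min_weight_basis_containing:
  assumes i: "i \<in> ground n" "x i \<noteq> \<infinity>"
  obtains B where "B \<in> matroid_bases n k \<mu>" "I \<subseteq> B" "i \<in> B"
    "\<And>B'. B' \<in> matroid_bases n k \<mu> \<Longrightarrow> I \<subseteq> B' \<Longrightarrow> weight B \<le> weight B'"
proof -
  let ?F = "{B \<in> matroid_bases n k \<mu>. I \<subseteq> B}"
  have "finite ?F" using finite_matroid_bases by simp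
  moreover have "?F \<noteq> {}" using I_independent by blast
  ultimately obtain B0 where B0: "B0 \<in> ?F" and min: "\<And>B. B \<in> ?F \<Longrightarrow> weight B0 \<le> weight B"
    using ex_is_arg_min_if_finite[of ?F weight] unfolding is_arg_min_linorder by blast
  show ?thesis
  proof (cases "i \<in> B0")
    case True
    then show ?thesis using that B0 min by blast
  next
    case False
    obtain j where j: "j \<in> B0" and le: "\<mu> (insert i (B0 - {j})) + x j \<le> \<mu> B0 + x i"
      using Lmu_exchange[OF x _ _ i(2)] B0 i(1) False by blast
    define B' where "B' = insert i (B0 - {j})"
    have B0_props: "B0 \<subseteq> ground n" "card B0 = k" "\<mu> B0 \<noteq> \<infinity>" "finite B0"
      using B0 by (auto simp: matroid_bases_def intro: finite_subset_ground)
    then have "\<mu> B' \<noteq> \<infinity>" "x j \<noteq> \<infinity>" using le i(2) by (auto simp: B'_def)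
    then have jB0: "j \<in> B0 - I" using j I_infinite by blast
    have "card B0 > 0" using j B0_props(4) card_gt_0_iff by blast
    then have B': "B' \<in> ?F" "i \<in> B'"
      using B0 B0_props jB0 i(1) False \<open>\<mu> B' \<noteq> \<infinity>\<close> by (auto simp: B'_def matroid_bases_def)
    have i_notin: "i \<notin> I" using i(2) I_infinite by blast
    have "real_of_ereal (\<mu> B') + real_of_ereal (x j) \<le> real_of_ereal (\<mu> B0) + real_of_ereal (x i)"
      using le finite_weight_terms[of B' i] finite_weight_terms[of B0 j] B'(1,2) B0 jB0 i_notin
      unfolding B'_def by (intro real_of_ereal_add_le_add) auto
    then have "weight B' \<le> weight B0"
      using weight_exchange[OF B0_props(4) jB0 False i_notin] unfolding B'_def by simp
    then show ?thesis using that B'(1) B'(2) min by fastforce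
  qed
qed

lemma shifted_cocircuit_at_min_weight_basis:
  assumes i: "i \<in> ground n" "x i \<noteq> \<infinity>"
  obtains S l where "S \<subseteq> ground n" "card S + 1 = k"
    "\<forall>j\<in>ground n. x j \<le> ereal l + cocircuit \<mu> S j" "x i = ereal l + cocircuit \<mu> S i"
proof -
  obtain B where B: "B \<in> matroid_bases n k \<mu>" "I \<subseteq> B" "i \<in> B"
    and min: "\<And>B'. B' \<in> matroid_bases n k \<mu> \<Longrightarrow> I \<subseteq> B' \<Longrightarrow> weight B \<le> weight B'"
    using exists_min_weight_basis_containing[OF i] by blast
  define S where "S = B - {i}"
  define l where "l = real_of_ereal (x i) - real_of_ereal (\<mu> B)"
  have i_notin: "i \<notin> I" using i(2) I_infinite by blast
  have B_props: "B \<subseteq> ground n" "card B = k" "finite B"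
    using B(1) by (auto simp: matroid_bases_def intro: finite_subset_ground)
  have S: "S \<subseteq> ground n" "insert i S = B" "i \<notin> S" "I \<subseteq> S" "finite S"
    using B_props B(2,3) i_notin by (auto simp: S_def)
  then have "card S + 1 = k" using B_props(2) by (metis Suc_eq_plus1 card_insert_disjoint)
  have finite_at_i: "\<bar>\<mu> B\<bar> \<noteq> \<infinity>" "\<bar>x i\<bar> \<noteq> \<infinity>"
    using finite_weight_terms[OF B(1,2)] B(3) i_notin by auto
  have at_i: "x i = ereal l + cocircuit \<mu> S i"
    using finite_at_i S(2,3) unfolding l_def cocircuit_def by (cases "x i"; cases "\<mu> B") auto
  have "x j \<le> ereal l + cocircuit \<mu> S j" if j: "j \<in> ground n" for j
  proof (cases "j \<in> S \<or> j = i \<or> \<mu> (insert j S) = \<infinity>")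
    case True
    then show ?thesis using at_i by (auto simp: cocircuit_def)
  next
    case False
    define B' where "B' = insert j S"
    have B': "B' \<in> matroid_bases n k \<mu>" "I \<subseteq> B'" "j \<in> B' - I"
      using S \<open>card S + 1 = k\<close> j False by (auto simp: B'_def matroid_bases_def)
    have "B' = insert j (B - {i})" using S(2,3) by (auto simp: B'_def)
    moreover have "weight B \<le> weight B'" by (rule min[OF B'(1,2)])
    ultimately have "real_of_ereal (x j) \<le> l + real_of_ereal (\<mu> B')"
      using weight_exchange[of B i j] B_props(3) B(3) i_notin B'(3) False S(2)
      unfolding l_def by (auto simp: B'_def)
    then show ?thesis
      using finite_weight_terms[OF B'] False
      by (cases "x j"; cases "\<mu> B'") (auto simp: cocircuit_def B'_def)
  qed
  then show ?thesis using that S(1) \<open>card S + 1 = k\<close> at_i by blast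
qed

end

lemma Lmu_le_shifted_cocircuit:
  assumes vm: "valuated_matroid n k \<mu>" and x: "x \<in> Lmu n k \<mu>" and i: "i \<in> ground n" "x i \<noteq> \<infinity>"
  obtains S l where "S \<subseteq> ground n" "card S + 1 = k"
    "\<forall>j\<in>ground n. x j \<le> ereal l + cocircuit \<mu> S j" "x i = ereal l + cocircuit \<mu> S i"
proof -
  obtain I where "\<forall>j\<in>I. x j = \<infinity>" "\<exists>B\<in>matroid_bases n k \<mu>. I \<subseteq> B"
    "\<And>B j. B \<in> matroid_bases n k \<mu> \<Longrightarrow> I \<subseteq> B \<Longrightarrow> j \<in> B - I \<Longrightarrow> x j \<noteq> \<infinity>"
    using obtain_maximal_infinite_independent[OF vm, where x = x] by blast
  then show ?thesis by (rule shifted_cocircuit_at_min_weight_basis[OF vm x _ _ _ i that])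
qed

section \<open>Reduction of isotropy to the cocircuits\<close>

lemma isotropic_subset: "isotropic n L \<Longrightarrow> L' \<subseteq> L \<Longrightarrow> isotropic n L'"
  unfolding isotropic_def by blast

lemma isotropic_Lmu_if_cocircuits:
  assumes vm: "valuated_matroid n k \<mu>" and iso: "isotropic n (cocircuits n k \<mu>)"
  shows "isotropic n (Lmu n k \<mu>)"
  unfolding isotropic_def
proof (intro ballI)
  fix x y assume x: "x \<in> Lmu n k \<mu>" and y: "y \<in> Lmu n k \<mu>"
  define g where "g j = x j + y (bar n j)" for j
  show "orthogonal n x y"
  proof (rule ccontr)
    assume "\<not> orthogonal n x y"
    then obtain i where i: "i \<in> ground n" "g i \<noteq> \<infinity>" and strict: "\<forall>j\<in>ground n - {i}. g i < g j"
      unfolding orthogonal_def not_trop_min2_iff[OF finite_ground] g_def by blast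
    have "x i \<noteq> \<infinity>" "y (bar n i) \<noteq> \<infinity>" using i(2) by (auto simp: g_def)
    obtain S l where S: "S \<subseteq> ground n" "card S + 1 = k"
      and le_S: "\<forall>j\<in>ground n. x j \<le> ereal l + cocircuit \<mu> S j" and eq_S: "x i = ereal l + cocircuit \<mu> S i"
      using Lmu_le_shifted_cocircuit[OF vm x i(1) \<open>x i \<noteq> \<infinity>\<close>] by blast
    obtain S' l' where S': "S' \<subseteq> ground n" "card S' + 1 = k"
      and le_S': "\<forall>j\<in>ground n. y j \<le> ereal l' + cocircuit \<mu> S' j"
      and eq_S': "y (bar n i) = ereal l' + cocircuit \<mu> S' (bar n i)"
      using Lmu_le_shifted_cocircuit[OF vm y bar_in_ground[OF i(1)] \<open>y (bar n i) \<noteq> \<infinity>\<close>] by blast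
    define h where "h j = cocircuit \<mu> S j + cocircuit \<mu> S' (bar n j)" for j
    have shift: "(ereal l + a) + (ereal l' + b) = ereal (l + l') + (a + b)" for a b :: ereal
      by (simp add: ac_simps)
    have "\<forall>j\<in>ground n. g j \<le> ereal (l + l') + h j"
      unfolding g_def h_def shift[symmetric] using le_S le_S' bar_in_ground by (auto intro: add_mono)
    moreover have "g i = ereal (l + l') + h i"
      unfolding g_def h_def shift[symmetric] using eq_S eq_S' by simp
    ultimately have "h i \<noteq> \<infinity> \<and> (\<forall>j\<in>ground n - {i}. h i < h j)"
      using i(2) strict by (rule strict_min_transfer)
    then have "\<not> trop_min2 (ground n) h"
      unfolding not_trop_min2_iff[OF finite_ground] using i(1) by blast
    then have "\<not> orthogonal n (cocircuit \<mu> S) (cocircuit \<mu> S')"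
      unfolding orthogonal_def h_def by simp
    moreover have "cocircuit \<mu> S \<in> cocircuits n k \<mu>" "cocircuit \<mu> S' \<in> cocircuits n k \<mu>"
      using S S' by (auto simp: cocircuits_def)
    ultimately show False using iso unfolding isotropic_def by blast
  qed
qed

lemma isotropic_Lmu_iff_cocircuits:
  "valuated_matroid n k \<mu> \<Longrightarrow> isotropic n (Lmu n k \<mu>) \<longleftrightarrow> isotropic n (cocircuits n k \<mu>)"
  using isotropic_Lmu_if_cocircuits isotropic_subset cocircuits_subset_Lmu by blast

section \<open>Orthogonal cocircuits and the symplectic relations\<close>

lemma orthogonal_pair_eq:
  assumes "orthogonal n x y" "p \<in> ground n" "q \<in> ground n" "p \<noteq> q"
    and "\<And>j. j \<in> ground n \<Longrightarrow> j \<noteq> p \<Longrightarrow> j \<noteq> q \<Longrightarrow> x j + y (bar n j) = \<infinity>"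
  shows "x p + y (bar n p) = x q + y (bar n q)"
proof -
  have "trop_min2 (ground n) (\<lambda>j. x j + y (bar n j)) \<longleftrightarrow> trop_min2 {p, q} (\<lambda>j. x j + y (bar n j))"
    using assms(2,3,5) by (intro trop_min2_drop_infinite) auto
  then show ?thesis
    using assms(1) trop_min2_doubleton[OF assms(4)] by (simp add: orthogonal_def)
qed

lemma cocircuits_orthogonal:
  assumes "isotropic n (cocircuits n k \<mu>)"
    and "S \<subseteq> ground n" "card S + 1 = k" "S' \<subseteq> ground n" "card S' + 1 = k"
  shows "orthogonal n (cocircuit \<mu> S) (cocircuit \<mu> S')"
  using assms unfolding isotropic_def cocircuits_def by blast

lemma cocircuit_exchange_relation:
  assumes orth: "orthogonal n (cocircuit \<mu> (insert c S)) (cocircuit \<mu> (insert d S))"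
    and S: "S \<subseteq> ground n" and D: "ground n - (S \<union> bar n ` S) = {c, bar n c, d, bar n d}"
    and cd: "c \<noteq> d" "c \<noteq> bar n d"
  shows "\<mu> (S \<union> {c, bar n c}) + \<mu> (S \<union> {c, d}) = \<mu> (S \<union> {c, d}) + \<mu> (S \<union> {d, bar n d})"
proof -
  have cd_in: "c \<in> ground n" "d \<in> ground n" "c \<notin> S" "bar n c \<notin> S" "d \<notin> S" "bar n d \<notin> S"
    using D by blast+
  have "bar n c \<noteq> d" using cd(2) cd_in by auto
  have off: "cocircuit \<mu> (insert c S) j + cocircuit \<mu> (insert d S) (bar n j) = \<infinity>"
    if j: "j \<in> ground n" "j \<noteq> bar n c" "j \<noteq> d" for j
  proof (cases "j \<in> insert c S")
    case True
    then show ?thesis by (simp add: cocircuit_def)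
  next
    case False
    have "bar n j \<in> insert d S"
    proof (cases "j \<in> bar n ` S")
      case True
      then show ?thesis using S by auto
    next
      case False
      then have "j = bar n d" using j \<open>j \<notin> insert c S\<close> D by blast
      then show ?thesis using cd_in by simp
    qed
    then show ?thesis by (simp add: cocircuit_def)
  qed
  have "cocircuit \<mu> (insert c S) (bar n c) + cocircuit \<mu> (insert d S) (bar n (bar n c))
      = cocircuit \<mu> (insert c S) d + cocircuit \<mu> (insert d S) (bar n d)"
    using cd_in \<open>bar n c \<noteq> d\<close> by (intro orthogonal_pair_eq[OF orth] off) (auto intro: bar_in_ground)
  then show ?thesis
    using cd cd_in bar_neq[of c n] bar_neq[of d n] by (simp add: cocircuit_def insert_commute)
qed

lemma cocircuit_opposite_relation:
  assumes orth: "orthogonal n (cocircuit \<mu> (insert c S)) (cocircuit \<mu> (insert (bar n c) S))"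
    and S: "S \<subseteq> ground n" and D: "ground n - (S \<union> bar n ` S) = {c, bar n c, d, bar n d}"
    and cd: "c \<noteq> d" "c \<noteq> bar n d"
    and infinite: "\<mu> (S \<union> {c, d}) = \<infinity>" "\<mu> (S \<union> {c, bar n d}) = \<infinity>"
  shows "\<mu> (S \<union> {c, bar n c}) + \<mu> (S \<union> {c, bar n c}) = \<infinity>"
proof -
  have cd_in: "c \<in> ground n" "d \<in> ground n" "c \<notin> S" "bar n c \<notin> S" "d \<notin> S" "bar n d \<notin> S"
    using D by blast+
  have "bar n c \<noteq> d" "bar n d \<noteq> c" using cd(2) cd_in by auto
  have off: "cocircuit \<mu> (insert c S) j + cocircuit \<mu> (insert (bar n c) S) (bar n j) = \<infinity>"
    if j: "j \<in> ground n" "j \<noteq> bar n c" "j \<noteq> d" for j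
  proof (cases "j \<in> insert c S \<or> j \<in> bar n ` S")
    case True
    then show ?thesis using S by (auto simp: cocircuit_def)
  next
    case False
    then have "j = bar n d" using j D by blast
    then show ?thesis
      using infinite(2) cd_in \<open>bar n d \<noteq> c\<close> by (simp add: cocircuit_def insert_commute)
  qed
  have "cocircuit \<mu> (insert c S) (bar n c) + cocircuit \<mu> (insert (bar n c) S) (bar n (bar n c))
      = cocircuit \<mu> (insert c S) d + cocircuit \<mu> (insert (bar n c) S) (bar n d)"
    using cd_in \<open>bar n c \<noteq> d\<close> by (intro orthogonal_pair_eq[OF orth] off) (auto intro: bar_in_ground)
  then show ?thesis
    using cd cd_in infinite(1) bar_neq[of c n] by (simp add: cocircuit_def insert_commute)
qed

lemma valuated_matroid_not_minf_Un_doubleton: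
  assumes "valuated_matroid n k \<mu>" "S \<subseteq> ground n" "card S + 2 = k"
    and "c \<in> ground n - S" "d \<in> ground n - S" "c \<noteq> d"
  shows "\<mu> (S \<union> {c, d}) \<noteq> -\<infinity>"
  using assms finite_subset_ground[OF assms(2)] by (intro valuated_matroid_not_minf[OF assms(1)]) auto

lemma symplectic_relation_if_cocircuits_orthogonal:
  assumes vm: "valuated_matroid n n \<mu>" and iso: "isotropic n (cocircuits n n \<mu>)"
    and S: "S \<subseteq> ground n" "card S + 2 = n"
    and D: "ground n - (S \<union> bar n ` S) = {a, bar n a, b, bar n b}" and ab: "a < n" "b < n" "a \<noteq> b"
  shows "\<mu> (S \<union> {a, bar n a}) = \<mu> (S \<union> {b, bar n b})"
proof -
  have in_D: "c \<in> ground n - S" if "c \<in> {a, bar n a, b, bar n b}" for c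
    using that D by blast
  have orth: "orthogonal n (cocircuit \<mu> (insert c S)) (cocircuit \<mu> (insert d S))"
    if "c \<in> {a, bar n a, b, bar n b}" "d \<in> {a, bar n a, b, bar n b}" for c d
    using in_D[OF that(1)] in_D[OF that(2)] S finite_subset_ground[OF S(1)]
    by (intro cocircuits_orthogonal[OF iso]) auto
  have basis: "\<mu> (S \<union> {c, d}) \<noteq> -\<infinity>"
    if "c \<in> {a, bar n a, b, bar n b}" "d \<in> {a, bar n a, b, bar n b}" "c \<noteq> d" for c d
    using in_D[OF that(1)] in_D[OF that(2)] that(3) by (rule valuated_matroid_not_minf_Un_doubleton[OF vm S])
  have pairs: "ground n - (S \<union> bar n ` S) = {c, bar n c, d, bar n d} \<and> c \<noteq> d \<and> c \<noteq> bar n d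
      \<and> S \<union> {c, bar n c} = S \<union> {a, bar n a} \<and> S \<union> {d, bar n d} = S \<union> {b, bar n b}"
    if "c \<in> {a, bar n a}" "d \<in> {b, bar n b}" for c d
    using that ab unfolding D by (auto simp: bar_def)
  have "a \<noteq> bar n a" "b \<noteq> bar n b" using ab by (simp_all add: bar_def)
  show ?thesis
  proof (cases "\<exists>c\<in>{a, bar n a}. \<exists>d\<in>{b, bar n b}. \<mu> (S \<union> {c, d}) \<noteq> \<infinity>")
    case True
    then obtain c d where c: "c \<in> {a, bar n a}" and d: "d \<in> {b, bar n b}"
      and finite: "\<mu> (S \<union> {c, d}) \<noteq> \<infinity>" by blast
    have "\<mu> (S \<union> {c, bar n c}) + \<mu> (S \<union> {c, d}) = \<mu> (S \<union> {c, d}) + \<mu> (S \<union> {d, bar n d})"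
      using pairs[OF c d] orth c d by (intro cocircuit_exchange_relation[OF _ S(1)]) auto
    moreover have "\<mu> (S \<union> {c, d}) \<noteq> -\<infinity>"
      using pairs[OF c d] c d by (intro basis) auto
    ultimately show ?thesis
      using pairs[OF c d] finite by (simp add: add.commute ereal_add_cancel_left)
  next
    case False
    have "\<mu> (S \<union> {a, bar n a}) + \<mu> (S \<union> {a, bar n a}) = \<infinity>"
      using pairs[of a b] orth False by (intro cocircuit_opposite_relation[OF _ S(1)]) auto
    moreover have "\<mu> (S \<union> {b, bar n b}) + \<mu> (S \<union> {b, bar n b}) = \<infinity>"
    proof (rule cocircuit_opposite_relation[OF _ S(1), where d = a])
      show "ground n - (S \<union> bar n ` S) = {b, bar n b, a, bar n a}" "b \<noteq> a" "b \<noteq> bar n a"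
        using D ab by (auto simp: bar_def)
    qed (use orth False in \<open>auto simp: insert_commute\<close>)
    moreover have "\<mu> (S \<union> {a, bar n a}) \<noteq> -\<infinity>" "\<mu> (S \<union> {b, bar n b}) \<noteq> -\<infinity>"
      using basis[of a "bar n a"] basis[of b "bar n b"] \<open>a \<noteq> bar n a\<close> \<open>b \<noteq> bar n b\<close> by simp_all
    ultimately show ?thesis by (metis ereal_plus_eq_PInfty)
  qed
qed

lemma SpDr_relation_if_cocircuits_orthogonal:
  assumes vm: "valuated_matroid n n \<mu>" and iso: "isotropic n (cocircuits n n \<mu>)"
    and S: "S \<subseteq> ground n" "card S + 2 = n" "pair_free n S"
  shows "trop_min2 (free_indices n S) (\<lambda>i. \<mu> (S \<union> {i, bar n i}))"
proof -
  obtain a b where ab: "free_indices n S = {a, b}" "a \<noteq> b"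
    using free_indices_doubleton[OF S] .
  then have "a < n" "b < n" by (auto simp: free_indices_def dest!: equalityD2)
  moreover have "ground n - (S \<union> bar n ` S) = {a, bar n a, b, bar n b}"
    using ground_diff_pairs[OF S(1)] ab(1) by (simp add: insert_commute)
  ultimately have "\<mu> (S \<union> {a, bar n a}) = \<mu> (S \<union> {b, bar n b})"
    using ab(2) by (intro symplectic_relation_if_cocircuits_orthogonal[OF vm iso S(1,2)])
  then show ?thesis using ab by (simp add: trop_min2_doubleton)
qed

lemma cocircuits_orthogonal_if_perp_invariant:
  assumes vm: "valuated_matroid n n \<mu>"
    and inv: "\<And>B. B \<subseteq> ground n \<Longrightarrow> card B = n \<Longrightarrow> \<mu> (perp n B) = \<mu> B"
  shows "isotropic n (cocircuits n n \<mu>)"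
proof -
  have "orthogonal n (cocircuit \<mu> S) (cocircuit \<mu> S')"
    if S: "S \<subseteq> ground n" "card S + 1 = n" and S': "S' \<subseteq> ground n" "card S' + 1 = n" for S S'
  proof -
    define R where "R = perp n S'"
    define h where "h = (\<lambda>j. cocircuit \<mu> S j + cocircuit \<mu> S' (bar n j))"
    have R: "R \<subseteq> ground n" "card R = n + 1"
      using card_perp[OF S'(1)] S'(2) by (auto simp: R_def perp_def)
    have on_R: "h j = \<mu> (R - {j}) + \<mu> (insert j S)" if j: "j \<in> R - S" for j
    proof -
      have "j \<in> ground n" "j \<notin> bar n ` S'" using j by (auto simp: R_def perp_def)
      then have "bar n j \<notin> S'" by (metis bar_bar image_eqI)
      with \<open>j \<in> ground n\<close> have "cocircuit \<mu> S' (bar n j) = \<mu> (perp n (insert (bar n j) S'))"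
        using S' finite_subset_ground[OF S'(1)] by (simp add: cocircuit_def inv bar_in_ground)
      also have "\<dots> = \<mu> (R - {j})" by (simp add: R_def perp_insert_bar \<open>j \<in> ground n\<close>)
      finally show ?thesis using j by (simp add: h_def cocircuit_def add.commute)
    qed
    have off_R: "h j = \<infinity>" if j: "j \<in> ground n - (R - S)" for j
    proof (cases "j \<in> S")
      case False
      then obtain s where "s \<in> S'" "j = bar n s" using j by (auto simp: R_def perp_def)
      then have "bar n j \<in> S'" using S'(1) by auto
      then show ?thesis by (simp add: h_def cocircuit_def)
    qed (simp add: h_def cocircuit_def)
    have "trop_min2 (ground n) h \<longleftrightarrow> trop_min2 (R - S) h"
      using R(1) off_R by (intro trop_min2_drop_infinite) auto
    also have "\<dots> \<longleftrightarrow> trop_min2 (R - S) (\<lambda>j. \<mu> (R - {j}) + \<mu> (insert j S))"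
      using on_R by (rule trop_min2_cong)
    finally have "trop_min2 (ground n) h" using valuated_matroid_pluecker[OF vm S R] by blast
    then show "orthogonal n (cocircuit \<mu> S) (cocircuit \<mu> S')" by (simp add: orthogonal_def h_def)
  qed
  then show ?thesis unfolding isotropic_def cocircuits_def by blast
qed

lemma perp_invariant_if_SpDr:
  assumes "n \<le> 3"
    and SpDr: "\<forall>S. S \<subseteq> ground n \<and> card S + 2 = n \<longrightarrow> trop_min2 (free_indices n S) (\<lambda>i. \<mu> (S \<union> {i, bar n i}))"
    and B: "B \<subseteq> ground n" "card B = n"
  shows "\<mu> (perp n B) = \<mu> B"
proof (cases "pair_free n B")
  case True
  then show ?thesis using perp_pair_free_basis[OF B] by simp
next
  case False
  then obtain j where j: "j \<in> B" "bar n j \<in> B" by (auto simp: pair_free_def)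
  define i where "i = j mod n"
  have "j \<in> ground n" using j B(1) by blast
  then have "i < n" "j = i \<or> j = bar n i" using ground_mod_cases unfolding i_def by blast+
  then have "i \<in> ground n" by (simp add: ground_def)
  then have i: "i \<in> B" "bar n i \<in> B" "i \<noteq> bar n i"
    using j \<open>j = i \<or> j = bar n i\<close> bar_neq[of i n] by auto
  define S where "S = B - {i, bar n i}"
  have "finite B" using B(1) by (rule finite_subset_ground)
  have pair: "{i, bar n i} \<subseteq> B" "card {i, bar n i} = 2" using i by auto
  then have "card S + 2 = n"
    using card_Diff_subset[OF _ pair(1)] card_mono[OF \<open>finite B\<close> pair(1)] B(2) by (simp add: S_def)
  moreover have "S \<subseteq> ground n" "B = S \<union> {i, bar n i}" using B(1) pair(1) by (auto simp: S_def)
  ultimately have S: "S \<subseteq> ground n" "card S + 2 = n" "B = S \<union> {i, bar n i}" by blast+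
  then have "pair_free n S" using assms(1) by (intro pair_free_if_card_le_1) auto
  have "i \<in> free_indices n S" using \<open>i < n\<close> by (auto simp: free_indices_def S_def)
  obtain a b where "free_indices n S = {a, b}" "a \<noteq> b"
    using free_indices_doubleton[OF S(1,2) \<open>pair_free n S\<close>] .
  with \<open>i \<in> free_indices n S\<close> obtain i' where i': "free_indices n S = {i, i'}" "i \<noteq> i'"
    by (cases "i = a") auto
  have "trop_min2 (free_indices n S) (\<lambda>i. \<mu> (S \<union> {i, bar n i}))" using SpDr S(1,2) by blast
  then have "\<mu> (S \<union> {i, bar n i}) = \<mu> (S \<union> {i', bar n i'})"
    unfolding i'(1) trop_min2_doubleton[OF i'(2)] .
  moreover have "perp n B = S \<union> {i', bar n i'}"
    using perp_Un_free_pair[OF S(1) \<open>pair_free n S\<close> i'] S(3) by simp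
  ultimately show ?thesis using S(3) by simp
qed

lemma SpDr_iff:
  "\<mu> \<in> SpDr n n \<longleftrightarrow> valuated_matroid n n \<mu> \<and>
    (\<forall>S. S \<subseteq> ground n \<and> card S + 2 = n \<longrightarrow> trop_min2 (free_indices n S) (\<lambda>i. \<mu> (S \<union> {i, bar n i})))"
  by (simp add: SpDr_def free_indices_def)

theorem proposition4p12:
  fixes n :: nat and \<mu> :: "nat set \<Rightarrow> ereal"
  assumes "n \<le> 3" and "valuated_matroid n n \<mu>"
  shows "isotropic n (Lmu n n \<mu>) \<longleftrightarrow> \<mu> \<in> SpDr n n"
proof -
  have pair_free: "pair_free n S" if "S \<subseteq> ground n" "card S + 2 = n" for S
    using that assms(1) by (intro pair_free_if_card_le_1) auto
  have "isotropic n (Lmu n n \<mu>) \<longleftrightarrow> isotropic n (cocircuits n n \<mu>)"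
    by (rule isotropic_Lmu_iff_cocircuits[OF assms(2)])
  also have "\<dots> \<longleftrightarrow> \<mu> \<in> SpDr n n"
  proof
    assume iso: "isotropic n (cocircuits n n \<mu>)"
    have "trop_min2 (free_indices n S) (\<lambda>i. \<mu> (S \<union> {i, bar n i}))"
      if "S \<subseteq> ground n" "card S + 2 = n" for S
      by (rule SpDr_relation_if_cocircuits_orthogonal[OF assms(2) iso that pair_free[OF that]])
    then show "\<mu> \<in> SpDr n n" unfolding SpDr_iff using assms(2) by blast
  next
    assume "\<mu> \<in> SpDr n n"
    then have "\<mu> (perp n B) = \<mu> B" if "B \<subseteq> ground n" "card B = n" for B
      using perp_invariant_if_SpDr[OF assms(1) _ that] unfolding SpDr_iff by blast
    then show "isotropic n (cocircuits n n \<mu>)"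
      by (rule cocircuits_orthogonal_if_perp_invariant[OF assms(2)])
  qed
  finally show ?thesis .
qed

end
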